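(* There exists an absolute constant $c>0$ such that the following holds. Let $n\in\mathbb{N}$, let $0\le\alpha\le1$, and let $S\subseteq\mathbb{F}_2^n$ with $|S|\ge\alpha 2^n$. Then $\rho(S)\ge c\,\alpha^{1/2}n^{1/2}$.
   Context: For $x,y\in\mathbb{F}_2^n$, the Hamming distance is $d_H(x,y)=\#\{i:x_i\neq y_i\}$. A set $R\subseteq\mathbb{F}_2^n$ is called rainbow if the $\binom{|R|}{2}$ Hamming distances $d_H(x,y)$ over unordered pairs of distinct points $x,y\in R$ are pairwise distinct. $\rho(S)$ denotes the maximum size of a rainbow subset $R\subseteq S$. *)

theory Defs
  imports Complex_Main
begin

text \<open>A point of F_2^n is represented by its support, a subset of {..<n}.\<close>

definition cube :: "nat \<Rightarrow> nat set set" where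
  "cube n = Pow {..<n}"

definition hamming :: "nat set \<Rightarrow> nat set \<Rightarrow> nat" where
  "hamming x y = card ((x - y) \<union> (y - x))"

definition rainbow :: "nat set set \<Rightarrow> bool" where
  "rainbow R \<longleftrightarrow> (\<forall>x\<in>R. \<forall>y\<in>R. \<forall>u\<in>R. \<forall>v\<in>R.
     x \<noteq> y \<longrightarrow> u \<noteq> v \<longrightarrow> hamming x y = hamming u v \<longrightarrow>
       {x, y} = {u, v})"

definition rho :: "nat set set \<Rightarrow> nat" where
  "rho S = Max {card R | R. R \<subseteq> S \<and> rainbow R}"

end

theory Submission
  imports Defs "HOL-Computational_Algebra.Primes" "HOL-Library.Discrete_Functions"
    "HOL-Real_Asymp.Real_Asymp"
begin

text \<open>For a point \<open>x\<close> of the cube, the points \<open>flip_prefix x t\<close> (flip the first \<open>t\<close>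
  coordinates of \<open>x\<close>), \<open>0 \<le> t \<le> n\<close>, lie on a geodesic: their Hamming distances are
  \<open>|s - t|\<close>. So a Sidon set of times yields a rainbow set. Averaging over \<open>x\<close>, some
  geodesic meets \<open>S\<close> in at least \<open>\<alpha>(n+1)\<close> times, and by the theorem of Komlos, Sulyok
  and Szemeredi every finite set of \<open>m\<close> naturals contains a Sidon set of size \<open>\<ge> c \<surd>m\<close>.

  For the latter, map the set by a random affine map \<open>a \<mapsto> (l a + u) mod Q\<close> into bins of
  width \<open>W\<close> placed at \<open>3W\<close> times the Erdos-Turan Sidon set \<open>{2pk + (k\<^sup>2 mod p) | k < p}\<close>
  and keep one element per occupied bin: additive quadruples of kept elements are carried to
  additive quadruples of bins. A second moment count shows that a constant fraction of the
  \<open>p\<close> bins is occupied. A prime \<open>p \<approx> \<surd>m\<close> exists by a weak Bertrand postulate, obtained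
  from Erdos' estimate of the central binomial coefficient.\<close>

section \<open>A weak Bertrand postulate\<close>

lemma multiplicity_le_self:
  assumes "prime (p::nat)" "m > 0"
  shows "multiplicity p m \<le> m"
proof -
  have "multiplicity p m < 2 ^ multiplicity p m" by (rule less_exp)
  also have "\<dots> \<le> p ^ multiplicity p m"
    using prime_ge_2_nat[OF assms(1)] by (simp add: power_mono)
  also have "\<dots> \<le> m" using multiplicity_dvd assms(2) by (rule dvd_imp_le)
  finally show ?thesis by simp
qed

lemma multiplicity_eq_card_prime_power_dvd:
  assumes p: "prime (p::nat)" and "m > 0" "m \<le> N"
  shows "multiplicity p m = card {i\<in>{1..N}. p ^ i dvd m}"
proof -
  have "p \<noteq> 1" using p by auto
  then have "p ^ i dvd m \<longleftrightarrow> i \<le> multiplicity p m" for i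
    using power_dvd_iff_le_multiplicity[of m p i] \<open>m > 0\<close> by simp
  then have "{i\<in>{1..N}. p ^ i dvd m} = {1..multiplicity p m}"
    using multiplicity_le_self[OF p \<open>m > 0\<close>] \<open>m \<le> N\<close> by (simp add: set_eq_iff) linarith
  then show ?thesis by simp
qed

lemma div_double_le:
  assumes "(d::nat) > 0"
  shows "(2*n) div d \<le> 2 * (n div d) + 1"
proof -
  have "2*n = 2*(n mod d) + d * (2*(n div d))"
    by (metis mod_mult_div_eq add_mult_distrib2 mult.left_commute)
  then have "(2*n) div d = (2*(n mod d)) div d + 2*(n div d)"
    using assms by simp
  moreover have "(2*(n mod d)) div d < 2"
    using assms by (simp add: div_less_iff_less_mult)
  ultimately show ?thesis by simp
qed

lemma multiplicity_fact:
  assumes p: "prime (p::nat)" and "n \<le> N"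
  shows "multiplicity p (fact n :: nat) = (\<Sum>i\<in>{1..N}. n div p ^ i)"
  using \<open>n \<le> N\<close>
proof (induction n)
  case 0
  then show ?case by simp
next
  case (Suc n)
  have "Suc n div p ^ i = n div p ^ i + of_bool (p ^ i dvd Suc n)" for i
    by (simp add: div_Suc dvd_eq_mod_eq_0)
  then have "(\<Sum>i\<in>{1..N}. Suc n div p ^ i)
      = (\<Sum>i\<in>{1..N}. n div p ^ i) + (\<Sum>i\<in>{1..N}. of_bool (p ^ i dvd Suc n))"
    by (simp only: sum.distrib)
  also have "(\<Sum>i\<in>{1..N}. of_bool (p ^ i dvd Suc n)) = card {i\<in>{1..N}. p ^ i dvd Suc n}"
    by (simp add: Int_def)
  also have "\<dots> = multiplicity p (Suc n)"
    using multiplicity_eq_card_prime_power_dvd[OF p _ Suc.prems] by simp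
  also have "(\<Sum>i\<in>{1..N}. n div p ^ i) = multiplicity p (fact n :: nat)"
    using Suc by simp
  also have "multiplicity p (fact n :: nat) + multiplicity p (Suc n)
      = multiplicity p (fact (Suc n) :: nat)"
    using prime_elem_multiplicity_mult_distrib[of p "Suc n" "fact n :: nat"] p
    by (simp add: fact_Suc)
  finally show ?case ..
qed

lemma multiplicity_central_binomial_le:
  assumes p: "prime (p::nat)"
  shows "multiplicity p ((2*n) choose n) \<le> card {i\<in>{1..2*n}. p ^ i \<le> 2*n}"
proof -
  have "fact (2*n) = ((2*n) choose n) * (fact n * fact n :: nat)"
    using binomial_fact_lemma[of n "2*n"] by (simp add: mult_ac)
  then have "multiplicity p (fact (2*n) :: nat)
      = multiplicity p ((2*n) choose n) + 2 * multiplicity p (fact n :: nat)"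
    using prime_elem_multiplicity_mult_distrib[of p] p by simp
  then have v: "multiplicity p ((2*n) choose n)
      = (\<Sum>i\<in>{1..2*n}. (2*n) div p ^ i) - 2 * (\<Sum>i\<in>{1..2*n}. n div p ^ i)"
    using multiplicity_fact[OF p, of n "2*n"] multiplicity_fact[OF p, of "2*n" "2*n"] by simp
  have "(2*n) div p ^ i \<le> 2 * (n div p ^ i) + of_bool (p ^ i \<le> 2*n)" for i
  proof (cases "p ^ i \<le> 2*n")
    case True
    then show ?thesis using div_double_le[of "p ^ i" n] prime_gt_0_nat[OF p] by simp
  qed simp
  then have "(\<Sum>i\<in>{1..2*n}. (2*n) div p ^ i)
      \<le> (\<Sum>i\<in>{1..2*n}. 2 * (n div p ^ i) + of_bool (p ^ i \<le> 2*n))"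
    by (rule sum_mono)
  also have "\<dots> = 2 * (\<Sum>i\<in>{1..2*n}. n div p ^ i) + card {i\<in>{1..2*n}. p ^ i \<le> 2*n}"
    by (simp add: sum.distrib sum_distrib_left Int_def)
  finally show ?thesis using v by linarith
qed

lemma power_card_powers_le:
  assumes "(p::nat) \<ge> 2" "N \<ge> 1"
  shows "p ^ card {i\<in>{1..N}. p ^ i \<le> N} \<le> N"
proof (cases "{i\<in>{1..N}. p ^ i \<le> N} = {}")
  case True
  show ?thesis unfolding True using assms by simp
next
  case False
  define j where "j = Max {i\<in>{1..N}. p ^ i \<le> N}"
  have "j \<in> {i\<in>{1..N}. p ^ i \<le> N}"
    unfolding j_def using False by (intro Max_in) auto
  moreover have "{i\<in>{1..N}. p ^ i \<le> N} \<subseteq> {1..j}"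
    unfolding j_def by auto
  then have "card {i\<in>{1..N}. p ^ i \<le> N} \<le> j"
    using card_mono[of "{1..j}"] by fastforce
  then have "p ^ card {i\<in>{1..N}. p ^ i \<le> N} \<le> p ^ j"
    using assms by (intro power_increasing) auto
  ultimately show ?thesis by simp
qed

lemma card_powers_le_one:
  assumes "(p::nat) \<ge> 2" "N < p * p"
  shows "card {i\<in>{1..N}. p ^ i \<le> N} \<le> 1"
proof -
  have "{i\<in>{1..N}. p ^ i \<le> N} \<subseteq> {1}"
  proof
    fix i assume i: "i \<in> {i\<in>{1..N}. p ^ i \<le> N}"
    have "\<not> 2 \<le> i"
    proof
      assume "2 \<le> i"
      then have "p * p \<le> p ^ i"
        using power_increasing[of 2 i p] assms(1) by (simp add: power2_eq_square)
      then show False using i assms(2) by simp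
    qed
    then show "i \<in> {1}" using i by simp
  qed
  then have "card {i\<in>{1..N}. p ^ i \<le> N} \<le> card {1::nat}"
    by (intro card_mono) auto
  then show ?thesis by simp
qed

lemma prime_power_dvd_central_binomial_le:
  assumes "prime p" "n \<ge> 1"
  shows "p ^ multiplicity p ((2*n) choose n) \<le> 2*n"
proof -
  have "p ^ multiplicity p ((2*n) choose n) \<le> p ^ card {i\<in>{1..2*n}. p ^ i \<le> 2*n}"
    using multiplicity_central_binomial_le[OF assms(1)] prime_ge_1_nat[OF assms(1)]
    by (intro power_increasing)
  also have "\<dots> \<le> 2*n"
    using power_card_powers_le[of p "2*n"] prime_ge_2_nat[OF assms(1)] assms(2) by simp
  finally show ?thesis .
qed

lemma multiplicity_central_binomial_le_one:
  assumes "prime p" "2*n < p * p"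
  shows "multiplicity p ((2*n) choose n) \<le> 1"
  using multiplicity_central_binomial_le[OF assms(1), of n]
    card_powers_le_one[OF prime_ge_2_nat[OF assms(1)] assms(2)] by linarith

lemma prime_factor_central_binomial_le:
  assumes "p \<in> prime_factors ((2*n) choose n)"
  shows "p \<le> 2*n"
proof -
  have p: "prime p" "p dvd (2*n) choose n" using assms by (auto simp: in_prime_factors_iff)
  have "((2*n) choose n) dvd (fact (2*n) :: nat)"
    using binomial_fact_lemma[of n "2*n"] by (metis dvd_triv_right le_add2 mult_2)
  then show ?thesis
    using dvd_trans[OF p(2)] prime_dvd_fact_iff[OF p(1)] by blast
qed

lemma prod_primes_dvd:
  assumes "finite P" "\<forall>p\<in>P. prime p \<and> p dvd (N::nat)"
  shows "\<Prod>P dvd N"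
  using assms
proof (induction P rule: finite_induct)
  case (insert q P)
  have q: "prime q" "q dvd N" using insert.prems by auto
  have IH: "\<Prod>P dvd N" using insert.IH insert.prems by auto
  have "\<not> q dvd \<Prod>P"
  proof
    assume "q dvd \<Prod>P"
    then obtain p where "p \<in> P" "q dvd p"
      using prime_dvd_prod_iff[OF insert.hyps(1) q(1), of id] by auto
    then have "q = p" using primes_dvd_imp_eq[OF q(1)] insert.prems by auto
    then show False using \<open>p \<in> P\<close> insert.hyps(2) by simp
  qed
  then have "coprime q (\<Prod>P)" by (rule prime_imp_coprime[OF q(1)])
  then have "q * \<Prod>P dvd N" using q(2) IH by (intro divides_mult)
  then show ?case using insert.hyps by simp
qed simp

lemma binomial_odd_middle_le: "(2*m+1) choose m \<le> 4 ^ m"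
proof -
  have "2 * ((2*m+1) choose m) = (\<Sum>k\<in>{m, m+1}. (2*m+1) choose k)"
    using binomial_symmetric[of m "2*m+1"] by simp
  also have "\<dots> \<le> (\<Sum>k\<le>2*m+1. (2*m+1) choose k)"
    by (intro sum_mono2) auto
  also have "\<dots> = 2 ^ (2*m+1)"
    by (rule choose_row_sum)
  also have "\<dots> = 2 * 4 ^ m"
    by (simp add: power_mult)
  finally show ?thesis by linarith
qed

lemma prime_dvd_binomial_odd_middle:
  assumes "prime p" "m + 1 < p" "p \<le> 2*m+1"
  shows "p dvd (2*m+1) choose m"
proof -
  have "fact m * fact (m+1) * ((2*m+1) choose m) = (fact (2*m+1) :: nat)"
    using binomial_fact_lemma[of m "2*m+1"] by simp
  moreover have "p dvd (fact (2*m+1) :: nat)" "\<not> p dvd (fact m :: nat)" "\<not> p dvd (fact (m+1) :: nat)"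
    using assms by (subst prime_dvd_fact_iff[OF assms(1)], simp)+
  ultimately show ?thesis
    using prime_dvd_mult_iff[OF assms(1)] by metis
qed


lemma prod_primes_between_le: "\<Prod>{p::nat. prime p \<and> m + 1 < p \<and> p \<le> 2*m+1} \<le> 4 ^ m"
proof -
  have "\<Prod>{p::nat. prime p \<and> m + 1 < p \<and> p \<le> 2*m+1} dvd (2*m+1) choose m"
    using prime_dvd_binomial_odd_middle by (intro prod_primes_dvd) auto
  then have "\<Prod>{p::nat. prime p \<and> m + 1 < p \<and> p \<le> 2*m+1} \<le> (2*m+1) choose m"
    by (rule dvd_imp_le) simp
  then show ?thesis using binomial_odd_middle_le order_trans by blast
qed

lemma primorial_le: "\<Prod>{p::nat. prime p \<and> p \<le> x} \<le> 4 ^ x"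
proof (induction x rule: less_induct)
  case (less x)
  consider "x \<le> 2" | "x > 2" "even x" | "x > 2" "odd x" by linarith
  then show ?case
  proof cases
    case 1
    show ?thesis
    proof (cases "x = 2")
      case True
      have primes: "{p::nat. prime p \<and> p \<le> x} = {2}"
        using True by (auto dest: prime_ge_2_nat)
      show ?thesis unfolding primes using True by simp
    next
      case False
      then have primes: "{p::nat. prime p \<and> p \<le> x} = {}"
        using 1 by (auto dest: prime_ge_2_nat)
      show ?thesis unfolding primes by simp
    qed
  next
    case 2
    have "{p::nat. prime p \<and> p \<le> x} = {p. prime p \<and> p \<le> x - 1}"
    proof (intro set_eqI iffI)
      fix p assume p: "p \<in> {p::nat. prime p \<and> p \<le> x}"
      then have "p \<noteq> x" using prime_odd_nat 2 by auto
      then show "p \<in> {p. prime p \<and> p \<le> x - 1}" using p by auto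
    qed auto
    also have "\<Prod>\<dots> \<le> 4 ^ (x - 1)" using less.IH[of "x - 1"] 2 by simp
    also have "(4::nat) ^ (x - 1) \<le> 4 ^ x" by simp
    finally show ?thesis .
  next
    case 3
    then obtain m where m: "x = 2*m+1" "m \<ge> 1" by (auto elim: oddE)
    let ?small = "{p::nat. prime p \<and> p \<le> m + 1}"
    let ?large = "{p::nat. prime p \<and> m + 1 < p \<and> p \<le> 2*m+1}"
    have "{p::nat. prime p \<and> p \<le> x} = ?small \<union> ?large" using m by auto
    moreover have "\<Prod>(?small \<union> ?large) = \<Prod>?small * \<Prod>?large"
      by (rule prod.union_disjoint) auto
    ultimately have "\<Prod>{p::nat. prime p \<and> p \<le> x} = \<Prod>?small * \<Prod>?large"
      by simp
    also have "\<dots> \<le> 4 ^ (m + 1) * 4 ^ m"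
      using less.IH[of "m + 1"] m prod_primes_between_le by (intro mult_le_mono) simp_all
    also have "\<dots> = 4 ^ x" using m by (simp add: power_add[symmetric])
    finally show ?thesis .
  qed
qed

lemma card_le_sqrt:
  assumes "\<And>p. p \<in> P \<Longrightarrow> (p::nat) \<ge> 1 \<and> p * p \<le> N"
  shows "real (card P) \<le> sqrt (real N)"
proof -
  define k where "k = nat \<lfloor>sqrt (real N)\<rfloor>"
  have "P \<subseteq> {1..k}"
  proof
    fix p assume "p \<in> P"
    then have p: "p \<ge> 1" "real p * real p \<le> real N"
      using assms by (auto simp flip: of_nat_mult)
    then have "real p \<le> sqrt (real N)" by (simp add: real_le_rsqrt power2_eq_square)
    then have "p \<le> k" unfolding k_def by (simp add: le_nat_floor)
    then show "p \<in> {1..k}" using p by simp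
  qed
  then have "card P \<le> k" using card_mono[of "{1..k}" P] by simp
  moreover have "real k \<le> sqrt (real N)" unfolding k_def by simp
  ultimately show ?thesis by linarith
qed

lemma prod_small_prime_factors_central_binomial_le:
  assumes n: "n \<ge> 1"
  defines "C \<equiv> (2*n) choose n"
  shows "real (\<Prod>p\<in>{p\<in>prime_factors C. p * p \<le> 2*n}. p ^ multiplicity p C)
    \<le> (2*real n) powr sqrt (2*real n)"
proof -
  let ?small = "{p\<in>prime_factors C. p * p \<le> 2*n}"
  have "(\<Prod>p\<in>?small. p ^ multiplicity p C) \<le> (\<Prod>p\<in>?small. 2 * n)"
    using prime_power_dvd_central_binomial_le[OF _ n]
    by (intro prod_mono) (auto simp: C_def in_prime_factors_iff)
  also have "\<dots> = (2 * n) ^ card ?small" by simp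
  finally have "real (\<Prod>p\<in>?small. p ^ multiplicity p C) \<le> real ((2 * n) ^ card ?small)"
    by (simp only: of_nat_le_iff)
  also have "\<dots> = (2 * real n) powr real (card ?small)"
    using n by (simp add: powr_realpow)
  also have "\<dots> \<le> (2 * real n) powr sqrt (2 * real n)"
  proof (rule powr_mono)
    have "real (card ?small) \<le> sqrt (real (2*n))"
      by (rule card_le_sqrt) (auto simp: in_prime_factors_iff prime_ge_1_nat)
    then show "real (card ?small) \<le> sqrt (2 * real n)" by simp
  qed (use n in simp)
  finally show ?thesis .
qed

text \<open>Such prime factors occur with multiplicity at most one and lie below \<open>n/2\<close>, so the
  primorial bound applies.\<close>
lemma prod_large_prime_factors_central_binomial_le:
  assumes no_primes: "\<And>p. prime p \<Longrightarrow> p \<le> 2*n \<Longrightarrow> 2*p \<le> n"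
  defines "C \<equiv> (2*n) choose n"
  shows "(\<Prod>p\<in>{p\<in>prime_factors C. \<not> p * p \<le> 2*n}. p ^ multiplicity p C) \<le> 2 ^ n"
proof -
  let ?large = "{p\<in>prime_factors C. \<not> p * p \<le> 2*n}"
  have "(\<Prod>p\<in>?large. p ^ multiplicity p C) \<le> (\<Prod>p\<in>?large. p)"
  proof (rule prod_mono)
    fix p assume "p \<in> ?large"
    then have p: "prime p" "2*n < p * p" by (auto simp: in_prime_factors_iff)
    then have "p ^ multiplicity p C \<le> p ^ 1"
      using multiplicity_central_binomial_le_one[OF p] prime_ge_1_nat[OF p(1)]
      unfolding C_def by (intro power_increasing)
    then show "0 \<le> p ^ multiplicity p C \<and> p ^ multiplicity p C \<le> p" by simp
  qed
  also have "(\<Prod>p\<in>?large. p) \<le> \<Prod>{p. prime p \<and> p \<le> n div 2}"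
  proof (rule dvd_imp_le)
    have "?large \<subseteq> {p. prime p \<and> p \<le> n div 2}"
    proof
      fix p assume "p \<in> ?large"
      then have "prime p" "p \<in> prime_factors ((2*n) choose n)"
        unfolding C_def by (auto simp: in_prime_factors_iff)
      then have "2 * p \<le> n"
        using no_primes prime_factor_central_binomial_le by blast
      then show "p \<in> {p. prime p \<and> p \<le> n div 2}"
        using \<open>prime p\<close> by simp
    qed
    then show "(\<Prod>p\<in>?large. p) dvd \<Prod>{p. prime p \<and> p \<le> n div 2}"
      by (rule prod_dvd_prod_subset[rotated]) simp
  qed (auto intro!: prod_pos simp: prime_gt_0_nat)
  also have "\<dots> \<le> 4 ^ (n div 2)" by (rule primorial_le)
  also have "(4::nat) ^ (n div 2) = 2 ^ (2 * (n div 2))" by (simp add: power_mult)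
  also have "(2::nat) ^ (2 * (n div 2)) \<le> 2 ^ n" by (intro power_increasing) auto
  finally show ?thesis .
qed

text \<open>Erdos' estimate from his proof of Bertrand's postulate.\<close>
lemma central_binomial_le_if_no_large_primes:
  assumes n: "n \<ge> 1" and no_primes: "\<And>p. prime p \<Longrightarrow> p \<le> 2*n \<Longrightarrow> 2*p \<le> n"
  shows "real ((2*n) choose n) \<le> (2*real n) powr sqrt (2*real n) * 2 ^ n"
proof -
  define C where "C = (2*n) choose n"
  define small where "small = {p\<in>prime_factors C. p * p \<le> 2*n}"
  define large where "large = {p\<in>prime_factors C. \<not> p * p \<le> 2*n}"
  have "C = (\<Prod>p\<in>prime_factors C. p ^ multiplicity p C)"
    using prime_factorization_nat[of C] by (simp add: C_def)
  also have "prime_factors C = small \<union> large"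
    unfolding small_def large_def by auto
  also have "(\<Prod>p\<in>small \<union> large. p ^ multiplicity p C)
      = (\<Prod>p\<in>small. p ^ multiplicity p C) * (\<Prod>p\<in>large. p ^ multiplicity p C)"
    by (rule prod.union_disjoint) (auto simp: small_def large_def)
  finally have "real C = real (\<Prod>p\<in>small. p ^ multiplicity p C) * real (\<Prod>p\<in>large. p ^ multiplicity p C)"
    by (metis of_nat_mult)
  also have "\<dots> \<le> (2*real n) powr sqrt (2*real n) * 2 ^ n"
  proof (rule mult_mono)
    show "real (\<Prod>p\<in>small. p ^ multiplicity p C) \<le> (2*real n) powr sqrt (2*real n)"
      using prod_small_prime_factors_central_binomial_le[OF n] unfolding small_def C_def .
    have "(\<Prod>p\<in>large. p ^ multiplicity p C) \<le> 2 ^ n"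
      using prod_large_prime_factors_central_binomial_le[OF no_primes] unfolding large_def C_def .
    then show "real (\<Prod>p\<in>large. p ^ multiplicity p C) \<le> 2 ^ n"
      by (metis of_nat_le_iff of_nat_numeral of_nat_power)
  qed (simp_all add: prod_nonneg)
  finally show ?thesis unfolding C_def .
qed

lemma eventually_prime_between:
  "\<forall>\<^sub>F n in at_top. \<exists>p::nat. prime p \<and> n < 2*p \<and> p \<le> 2*n"
proof -
  have "\<forall>\<^sub>F n in at_top. (2 * real n) * (2 * real n) powr sqrt (2 * real n) < 2 ^ n"
    by real_asymp
  moreover have "\<forall>\<^sub>F n in at_top. n \<ge> (1::nat)"
    by (rule eventually_ge_at_top)
  ultimately show ?thesis
  proof eventually_elim
    case (elim n)
    show ?case
    proof (rule ccontr)
      assume "\<nexists>p. prime p \<and> n < 2*p \<and> p \<le> 2*n"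
      then have "real ((2*n) choose n) \<le> (2*real n) powr sqrt (2*real n) * 2 ^ n"
        using elim(2) by (intro central_binomial_le_if_no_large_primes) (auto simp: not_less)
      moreover have "4 ^ n / (2 * real n) \<le> real ((2*n) choose n)"
        using central_binomial_lower_bound[of n] elim(2) by simp
      ultimately have "4 ^ n / (2 * real n) \<le> (2*real n) powr sqrt (2*real n) * 2 ^ n"
        by linarith
      moreover have "(4::real) ^ n = 2 ^ n * 2 ^ n"
        by (simp flip: power_mult_distrib)
      ultimately have "2 ^ n * 2 ^ n \<le> (2 * real n) * ((2*real n) powr sqrt (2*real n) * 2 ^ n)"
        using elim(2) by (simp add: divide_le_eq mult_ac)
      then have "2 ^ n \<le> (2 * real n) * (2 * real n) powr sqrt (2 * real n)"
        by (simp add: mult_ac)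
      then show False using elim(1) by simp
    qed
  qed
qed

lemma weak_bertrand: "\<exists>C::nat. C \<ge> 1 \<and> (\<forall>x\<ge>1. \<exists>p. prime p \<and> x \<le> p \<and> p \<le> C*x)"
proof -
  obtain N where N: "\<And>n. n \<ge> N \<Longrightarrow> \<exists>p::nat. prime p \<and> n < 2*p \<and> p \<le> 2*n"
    using eventually_prime_between by (auto simp: eventually_at_top_linorder)
  obtain q where q: "prime q" "q > N" using bigger_prime by blast
  have "\<exists>p. prime p \<and> x \<le> p \<and> p \<le> (4 + q) * x" if x: "x \<ge> 1" for x
  proof (cases "x \<ge> N")
    case True
    then obtain p where "prime p" "2*x < 2*p" "p \<le> 2*(2*x)" using N[of "2*x"] by auto
    then show ?thesis by (intro exI[of _ p]) (auto simp: algebra_simps)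
  next
    case False
    have "q \<le> (4 + q) * x" using x by (metis le_add2 mult_le_mono mult_1_right)
    then show ?thesis using q False by (intro exI[of _ q]) auto
  qed
  then show ?thesis by (intro exI[of _ "4 + q"]) auto
qed

section \<open>Sidon sets\<close>

definition sidon :: "nat set \<Rightarrow> bool" where
  "sidon T \<longleftrightarrow> (\<forall>a\<in>T. \<forall>b\<in>T. \<forall>c\<in>T. \<forall>d\<in>T. a + b = c + d \<longrightarrow> {a, b} = {c, d})"

lemma sidon_singleton: "sidon {a}"
  unfolding sidon_def by auto

lemma mult_add_less_inject:
  fixes M a b r s :: nat
  assumes "M * a + r = M * b + s" "r < M" "s < M"
  shows "a = b \<and> r = s"
proof -
  have "a = (M * a + r) div M" "b = (M * b + s) div M"
    using assms(2,3) by simp_all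
  then have "a = b" using assms(1) by simp
  then show ?thesis using assms(1) by simp
qed

lemma dvd_abs_less_imp_eq_0:
  fixes d m :: int
  assumes "m dvd d" "\<bar>d\<bar> < m"
  shows "d = 0"
  using dvd_imp_le_int[of d m] assms by (cases "d = 0") auto

definition erdos_turan_set :: "nat \<Rightarrow> nat set" where
  "erdos_turan_set p = (\<lambda>k. 2*p*k + (k^2 mod p)) ` {..<p}"

lemma erdos_turan_key:
  fixes p k1 k2 k3 k4 :: nat
  assumes p: "prime p" "p > 2" and k: "k1 < p" "k2 < p" "k3 < p"
    and sum_eq: "k1 + k2 = k3 + k4"
    and sq_sum_cong: "(k1^2 + k2^2) mod p = (k3^2 + k4^2) mod p"
  shows "k1 = k3 \<or> k1 = k4"
proof -
  have "int ((k1^2 + k2^2) mod p) = int ((k3^2 + k4^2) mod p)" using sq_sum_cong by simp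
  then have "(int k1^2 + int k2^2) mod int p = (int k3^2 + int k4^2) mod int p"
    by (simp add: zmod_int)
  then have "int p dvd (int k1^2 + int k2^2) - (int k3^2 + int k4^2)"
    by (simp add: mod_eq_dvd_iff)
  moreover have "int k4 = int k1 + int k2 - int k3" using sum_eq by simp
  ultimately have "int p dvd 2 * ((int k1 - int k3) * (int k3 - int k2))"
    by (simp add: algebra_simps power2_eq_square)
  moreover have "\<not> int p dvd 2"
  proof
    assume "int p dvd 2"
    then have "p \<le> 2" using zdvd_imp_le by fastforce
    then show False using p by simp
  qed
  moreover have "prime (int p)" using p by simp
  ultimately have "int p dvd int k1 - int k3 \<or> int p dvd int k3 - int k2"
    by (simp add: prime_dvd_mult_iff)
  then have "int k1 - int k3 = 0 \<or> int k3 - int k2 = 0"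
  proof
    assume "int p dvd int k1 - int k3"
    then show ?thesis using k by (intro disjI1 dvd_abs_less_imp_eq_0) auto
  next
    assume "int p dvd int k3 - int k2"
    then show ?thesis using k by (intro disjI2 dvd_abs_less_imp_eq_0) auto
  qed
  then show ?thesis using sum_eq by auto
qed

lemma sidon_erdos_turan_set:
  assumes p: "prime p" "p > 2"
  shows "sidon (erdos_turan_set p)"
  unfolding sidon_def
proof (intro ballI impI)
  fix a b c d assume "a \<in> erdos_turan_set p" "b \<in> erdos_turan_set p"
    "c \<in> erdos_turan_set p" "d \<in> erdos_turan_set p" and abcd: "a + b = c + d"
  then obtain k1 k2 k3 k4 where k: "k1 < p" "k2 < p" "k3 < p" "k4 < p"
    and a: "a = 2*p*k1 + (k1^2 mod p)" and b: "b = 2*p*k2 + (k2^2 mod p)"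
    and c: "c = 2*p*k3 + (k3^2 mod p)" and d: "d = 2*p*k4 + (k4^2 mod p)"
    unfolding erdos_turan_set_def by auto
  have "(2*p) * (k1 + k2) + ((k1^2 mod p) + (k2^2 mod p))
      = (2*p) * (k3 + k4) + ((k3^2 mod p) + (k4^2 mod p))"
    using abcd by (simp add: a b c d algebra_simps)
  moreover have "k^2 mod p < p" for k using p by simp
  then have "(k1^2 mod p) + (k2^2 mod p) < 2*p" "(k3^2 mod p) + (k4^2 mod p) < 2*p"
    by (metis add_less_mono mult_2)+
  ultimately have sum_eq: "k1 + k2 = k3 + k4"
    and "(k1^2 mod p) + (k2^2 mod p) = (k3^2 mod p) + (k4^2 mod p)"
    using mult_add_less_inject by blast+
  then have "(k1^2 + k2^2) mod p = (k3^2 + k4^2) mod p"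
    by (metis mod_add_eq)
  then have "k1 = k3 \<or> k1 = k4"
    using erdos_turan_key[OF p k(1-3) sum_eq] by blast
  then show "{a, b} = {c, d}"
    using sum_eq by (auto simp: a b c d)
qed

lemma card_erdos_turan_set:
  assumes "p > 0"
  shows "card (erdos_turan_set p) = p"
proof -
  have "inj_on (\<lambda>k. 2*p*k + (k^2 mod p)) {..<p}"
  proof (rule inj_onI)
    fix x y assume "2*p*x + (x^2 mod p) = 2*p*y + (y^2 mod p)"
    moreover have "x^2 mod p < 2*p" "y^2 mod p < 2*p"
      using assms by (simp_all add: less_trans[OF mod_less_divisor])
    ultimately show "x = y" using mult_add_less_inject[of "2*p" x] by blast
  qed
  then show ?thesis unfolding erdos_turan_set_def by (simp add: card_image)
qed

lemma erdos_turan_set_less: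
  assumes "t \<in> erdos_turan_set p"
  shows "t < 2*p*p"
proof -
  obtain k where k: "k < p" "t = 2*p*k + (k^2 mod p)"
    using assms unfolding erdos_turan_set_def by auto
  then have "t < 2*p*k + p" by simp
  also have "\<dots> \<le> 2*p*p"
    using mult_le_mono2[of "k + 1" p "2*p"] k(1) by (simp add: algebra_simps)
  finally show ?thesis .
qed

section \<open>The theorem of Komlos, Sulyok and Szemeredi\<close>

lemma sidon_if_additive_inj:
  assumes "sidon T" "inj_on f B" "f ` B \<subseteq> T"
    and "\<And>a b c d. a \<in> B \<Longrightarrow> b \<in> B \<Longrightarrow> c \<in> B \<Longrightarrow> d \<in> B \<Longrightarrow> a + b = c + d \<Longrightarrow>
      f a + f b = f c + f d"
  shows "sidon B"
  unfolding sidon_def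
proof (intro ballI impI)
  fix a b c d assume abcd: "a \<in> B" "b \<in> B" "c \<in> B" "d \<in> B" "a + b = c + d"
  then have "f a + f b = f c + f d" using assms(4) by blast
  moreover have "f a \<in> T" "f b \<in> T" "f c \<in> T" "f d \<in> T"
    using abcd assms(3) by auto
  ultimately have "{f a, f b} = {f c, f d}"
    using assms(1) unfolding sidon_def by blast
  then have "f ` {a, b} = f ` {c, d}" by simp
  moreover have "{a, b} \<subseteq> B" "{c, d} \<subseteq> B" using abcd by auto
  ultimately show "{a, b} = {c, d}"
    using inj_on_image_eq_iff[OF assms(2)] by blast
qed

lemma sum_of_bool_pairs:
  fixes P :: "'a \<Rightarrow> bool"
  assumes "finite A"
  defines "k \<equiv> card (A \<inter> {a. P a})"
  shows "(\<Sum>a\<in>A. \<Sum>b\<in>A-{a}. (of_bool (P a) * of_bool (P b) :: real)) = real k * real k - real k"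
proof -
  have k: "(\<Sum>a\<in>A. (of_bool (P a) :: real)) = real k"
    using assms by (simp add: k_def)
  have inner: "(\<Sum>b\<in>A-{a}. (of_bool (P a) * of_bool (P b) :: real))
      = of_bool (P a) * (real k - of_bool (P a))" if "a \<in> A" for a
  proof -
    have "(\<Sum>b\<in>A-{a}. (of_bool (P a) * of_bool (P b) :: real))
        = of_bool (P a) * (\<Sum>b\<in>A-{a}. of_bool (P b))"
      by (simp only: sum_distrib_left)
    also have "(\<Sum>b\<in>A-{a}. (of_bool (P b) :: real)) = real k - of_bool (P a)"
      using sum_diff1[OF assms(1), of "\<lambda>b. (of_bool (P b) :: real)" a] that k by simp
    finally show ?thesis .
  qed
  have "(\<Sum>a\<in>A. \<Sum>b\<in>A-{a}. (of_bool (P a) * of_bool (P b) :: real))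
      = (\<Sum>a\<in>A. of_bool (P a) * (real k - of_bool (P a)))"
    by (rule sum.cong[OF refl]) (rule inner)
  also have "\<dots> = (\<Sum>a\<in>A. of_bool (P a) * real k - of_bool (P a))"
    by (rule sum.cong[OF refl]) (simp add: algebra_simps)
  also have "\<dots> = real k * real k - real k"
    using k by (simp add: sum_subtractf sum_distrib_right[symmetric])
  finally show ?thesis .
qed

lemma bonferroni_of_bool:
  assumes "finite A"
  shows "(2::real) * of_bool (\<exists>a\<in>A. P a)
    \<ge> 2 * (\<Sum>a\<in>A. of_bool (P a)) - (\<Sum>a\<in>A. \<Sum>b\<in>A-{a}. of_bool (P a) * of_bool (P b))"
proof -
  define k where "k = card (A \<inter> {a. P a})"
  have "(\<exists>a\<in>A. P a) \<longleftrightarrow> A \<inter> {a. P a} \<noteq> {}" by blast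
  then have ex: "(\<exists>a\<in>A. P a) \<longleftrightarrow> k \<noteq> 0"
    using assms unfolding k_def by simp
  have "2 * of_bool (k \<noteq> 0) \<ge> 3 * real k - real k * real k"
  proof (cases "k \<le> 2")
    case True
    then have "k = 0 \<or> k = 1 \<or> k = 2" by auto
    then show ?thesis by auto
  next
    case False
    then have "3 * real k \<le> real k * real k" by (intro mult_right_mono) auto
    then show ?thesis by simp
  qed
  then show ?thesis
    using sum_of_bool_pairs[OF assms, of P] assms unfolding ex k_def by simp
qed

lemma sum_rotate3:
  "(\<Sum>l\<in>X. \<Sum>u\<in>Y. \<Sum>a\<in>Z. (g l u a :: 'b::comm_monoid_add))
    = (\<Sum>a\<in>Z. \<Sum>l\<in>X. \<Sum>u\<in>Y. g l u a)"
proof -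
  have "(\<Sum>l\<in>X. \<Sum>u\<in>Y. \<Sum>a\<in>Z. g l u a) = (\<Sum>l\<in>X. \<Sum>a\<in>Z. \<Sum>u\<in>Y. g l u a)"
    by (rule sum.cong[OF refl]) (rule sum.swap)
  also have "\<dots> = (\<Sum>a\<in>Z. \<Sum>l\<in>X. \<Sum>u\<in>Y. g l u a)" by (rule sum.swap)
  finally show ?thesis .
qed

lemma card_shift_mod:
  assumes "Q > 0" "B \<subseteq> {..<Q}"
  shows "card {u\<in>{..<Q}. (c + u) mod Q \<in> B} = card (B :: nat set)"
proof -
  define f where "f u = (c + u) mod Q" for u
  have inj: "inj_on f {..<Q}"
  proof (rule inj_onI)
    fix x y assume xy: "x \<in> {..<Q}" "y \<in> {..<Q}" "f x = f y"
    then have "(int c + int x) mod int Q = (int c + int y) mod int Q"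
      unfolding f_def by (metis of_nat_add zmod_int)
    then have "int Q dvd int x - int y" by (simp add: mod_eq_dvd_iff)
    then have "int x - int y = 0" by (rule dvd_abs_less_imp_eq_0) (use xy in auto)
    then show "x = y" by simp
  qed
  have "f ` {..<Q} = {..<Q}"
  proof (rule card_subset_eq)
    show "f ` {..<Q} \<subseteq> {..<Q}" unfolding f_def using assms(1) by auto
    show "card (f ` {..<Q}) = card {..<Q}" using card_image[OF inj] .
  qed simp
  then have "f ` {u\<in>{..<Q}. f u \<in> B} = B"
    using assms(2) by (auto simp: image_iff subset_eq)
  moreover have "card (f ` {u\<in>{..<Q}. f u \<in> B}) = card {u\<in>{..<Q}. f u \<in> B}"
    by (rule card_image) (rule inj_on_subset[OF inj], auto)
  ultimately show ?thesis unfolding f_def by simp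
qed

lemma card_mult_mod_in_le:
  assumes Q: "prime Q" and "finite D" "d \<noteq> 0" "\<bar>d\<bar> < int Q"
  shows "card {l\<in>{1..<Q}. (int l * d) mod int Q \<in> D} \<le> card D"
proof (rule card_inj_on_le)
  show "inj_on (\<lambda>l. (int l * d) mod int Q) {l\<in>{1..<Q}. (int l * d) mod int Q \<in> D}"
  proof (rule inj_onI)
    fix x y assume xy: "x \<in> {l\<in>{1..<Q}. (int l * d) mod int Q \<in> D}"
      "y \<in> {l\<in>{1..<Q}. (int l * d) mod int Q \<in> D}"
      "(int x * d) mod int Q = (int y * d) mod int Q"
    then have "int Q dvd (int x - int y) * d"
      by (simp add: mod_eq_dvd_iff left_diff_distrib)
    then have "int Q dvd int x - int y \<or> int Q dvd d"
      using Q by (simp add: prime_dvd_mult_iff)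
    moreover have "\<not> int Q dvd d"
      using dvd_abs_less_imp_eq_0 assms(3,4) by blast
    ultimately have "int x - int y = 0"
      by (intro dvd_abs_less_imp_eq_0) (use xy in auto)
    then show "x = y" by simp
  qed
qed (use assms(2) in auto)

context
  fixes A T :: "nat set" and Q L W :: nat
  assumes finite_A: "finite A" and finite_T: "finite T" and sidon_T: "sidon T"
    and T_less: "\<forall>t\<in>T. t < L" and prime_Q: "prime Q" and A_less: "\<forall>a\<in>A. a < Q"
    and W_pos: "W \<ge> 1" and LW_le: "6*L*W \<le> Q"
begin

definition residue :: "nat \<Rightarrow> nat \<Rightarrow> nat \<Rightarrow> nat" where
  "residue l u a = (l*a + u) mod Q"

definition bin :: "nat \<Rightarrow> nat set" where
  "bin t = {3*t*W ..< 3*t*W + W}"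

definition occupied :: "nat \<Rightarrow> nat \<Rightarrow> nat set" where
  "occupied l u = {t\<in>T. \<exists>a\<in>A. residue l u a \<in> bin t}"

lemma div_bin: "x \<in> bin t \<Longrightarrow> x div (3*W) = t"
  by (intro div_nat_eqI) (auto simp: bin_def algebra_simps)

lemma div_add_bin: "x \<in> bin s \<Longrightarrow> y \<in> bin t \<Longrightarrow> (x + y) div (3*W) = s + t"
  by (intro div_nat_eqI) (auto simp: bin_def algebra_simps)

lemma double_bin_less:
  assumes "t \<in> T" "x \<in> bin t"
  shows "2*x < Q"
proof -
  have "t + 1 \<le> L" using T_less assms(1) by auto
  then have "3*W*(t+1) \<le> 3*W*L" by (intro mult_le_mono2)
  moreover have "x < 3*t*W + W" using assms(2) unfolding bin_def by simp
  ultimately have "2*x < 6*L*W" by (simp add: algebra_simps)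
  then show ?thesis using LW_le by linarith
qed

lemma residue_add_eq:
  assumes "a + b = c + d"
    and "2 * residue l u a < Q" "2 * residue l u b < Q" "2 * residue l u c < Q" "2 * residue l u d < Q"
  shows "residue l u a + residue l u b = residue l u c + residue l u d"
proof -
  have "(residue l u a + residue l u b) mod Q = ((l*a + u) + (l*b + u)) mod Q"
    unfolding residue_def by (simp add: mod_add_eq)
  also have "(l*a + u) + (l*b + u) = (l*c + u) + (l*d + u)"
    using assms(1) by (metis add.assoc add.left_commute add_mult_distrib2)
  also have "((l*c + u) + (l*d + u)) mod Q = (residue l u c + residue l u d) mod Q"
    unfolding residue_def by (simp add: mod_add_eq)
  finally show ?thesis using assms(2-) by simp
qed

lemma ex_sidon_subset_occupied: "\<exists>B\<subseteq>A. sidon B \<and> card B = card (occupied l u)"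
proof -
  define g where "g t = (SOME a. a \<in> A \<and> residue l u a \<in> bin t)" for t
  have g: "g t \<in> A \<and> residue l u (g t) \<in> bin t" if "t \<in> occupied l u" for t
    using that unfolding occupied_def g_def by (metis (mono_tags, lifting) mem_Collect_eq someI_ex)
  define f where "f a = residue l u a div (3*W)" for a
  have fg: "f (g t) = t" if "t \<in> occupied l u" for t
    using g[OF that] div_bin unfolding f_def by blast
  have "sidon (g ` occupied l u)"
  proof (rule sidon_if_additive_inj[OF sidon_T])
    show "inj_on f (g ` occupied l u)"
      using fg by (intro inj_onI) auto
    have "occupied l u \<subseteq> T" unfolding occupied_def by blast
    then show "f ` g ` occupied l u \<subseteq> T"
      using fg by (auto simp: image_iff)
    fix a b c d assume "a \<in> g ` occupied l u" "b \<in> g ` occupied l u"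
      "c \<in> g ` occupied l u" "d \<in> g ` occupied l u" and abcd: "a + b = c + d"
    then obtain ta tb tc td where t: "ta \<in> occupied l u" "tb \<in> occupied l u"
      "tc \<in> occupied l u" "td \<in> occupied l u"
      and "a = g ta" "b = g tb" "c = g tc" "d = g td" by blast
    then have bins: "residue l u a \<in> bin ta" "residue l u b \<in> bin tb"
      "residue l u c \<in> bin tc" "residue l u d \<in> bin td"
      and f: "f a = ta" "f b = tb" "f c = tc" "f d = td"
      using g fg by auto
    have "ta \<in> T" "tb \<in> T" "tc \<in> T" "td \<in> T" using t by (auto simp: occupied_def)
    then have "residue l u a + residue l u b = residue l u c + residue l u d"
      using bins by (intro residue_add_eq abcd double_bin_less)
    then show "f a + f b = f c + f d"
      using div_add_bin[OF bins(1,2)] div_add_bin[OF bins(3,4)] f by simp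
  qed
  moreover have "g ` occupied l u \<subseteq> A" using g by auto
  moreover have "card (g ` occupied l u) = card (occupied l u)"
    using fg by (intro card_image inj_on_inverseI)
  ultimately show ?thesis by blast
qed

lemma sum_residue_in_bin:
  assumes "t \<in> T"
  shows "(\<Sum>u\<in>{..<Q}. of_bool (residue l u a \<in> bin t)) = real W"
proof -
  have "bin t \<subseteq> {..<Q}" using double_bin_less[OF assms] by fastforce
  then have "card {u\<in>{..<Q}. (l*a + u) mod Q \<in> bin t} = card (bin t)"
    using prime_gt_0_nat[OF prime_Q] by (intro card_shift_mod)
  then show ?thesis by (simp add: residue_def bin_def Int_def)
qed

lemma residue_diff_mod_near_zero:
  assumes "t \<in> T" "residue l u a \<in> bin t" "residue l u b \<in> bin t"
  shows "(int l * (int b - int a)) mod int Q \<in> {0..<int W} \<union> {int Q - int W..<int Q}"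
proof -
  define \<delta> where "\<delta> = int (residue l u b) - int (residue l u a)"
  have "\<delta> mod int Q = ((int l * int b + int u) - (int l * int a + int u)) mod int Q"
    unfolding \<delta>_def residue_def by (simp add: zmod_int mod_diff_eq)
  then have \<delta>_mod: "(int l * (int b - int a)) mod int Q = \<delta> mod int Q"
    by (simp add: algebra_simps)
  have \<delta>: "\<bar>\<delta>\<bar> < int W" using assms(2,3) unfolding \<delta>_def bin_def by auto
  have "1 \<le> 6*L" using T_less assms(1) by fastforce
  then have "1 * W \<le> 6*L*W" by (rule mult_le_mono1)
  then have "W \<le> Q" using LW_le by linarith
  show ?thesis
  proof (cases "\<delta> \<ge> 0")
    case True
    then have "\<delta> mod int Q = \<delta>" using \<delta> \<open>W \<le> Q\<close> by (intro mod_pos_pos_trivial) auto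
    then show ?thesis using \<delta>_mod True \<delta> by auto
  next
    case False
    then have "(\<delta> + int Q) mod int Q = \<delta> + int Q" using \<delta> \<open>W \<le> Q\<close> by (intro mod_pos_pos_trivial) auto
    then show ?thesis using \<delta>_mod False \<delta> by auto
  qed
qed

lemma sum_pair_in_bin_le:
  assumes "a \<in> A" "b \<in> A" "a \<noteq> b" "t \<in> T"
  shows "(\<Sum>l\<in>{1..<Q}. \<Sum>u\<in>{..<Q}. of_bool (residue l u a \<in> bin t) * of_bool (residue l u b \<in> bin t))
    \<le> 2 * real W * real W"
proof -
  define G where "G = {l\<in>{1..<Q}. (int l * (int b - int a)) mod int Q \<in> {0..<int W} \<union> {int Q - int W..<int Q}}"
  have "(\<Sum>u\<in>{..<Q}. of_bool (residue l u a \<in> bin t) * of_bool (residue l u b \<in> bin t))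
      \<le> of_bool (l \<in> G) * real W" if l: "l \<in> {1..<Q}" for l
  proof -
    have "(\<Sum>u\<in>{..<Q}. of_bool (residue l u a \<in> bin t) * of_bool (residue l u b \<in> bin t))
        \<le> (\<Sum>u\<in>{..<Q}. of_bool (l \<in> G) * (of_bool (residue l u a \<in> bin t) :: real))"
    proof (rule sum_mono)
      fix u
      show "of_bool (residue l u a \<in> bin t) * of_bool (residue l u b \<in> bin t)
          \<le> of_bool (l \<in> G) * (of_bool (residue l u a \<in> bin t) :: real)"
        using residue_diff_mod_near_zero[OF assms(4), of l u a b] l by (auto simp: G_def)
    qed
    also have "\<dots> = of_bool (l \<in> G) * real W"
      using sum_residue_in_bin[OF assms(4)] by (simp flip: sum_distrib_left)
    finally show ?thesis .
  qed
  then have "(\<Sum>l\<in>{1..<Q}. \<Sum>u\<in>{..<Q}. of_bool (residue l u a \<in> bin t) * of_bool (residue l u b \<in> bin t))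
      \<le> (\<Sum>l\<in>{1..<Q}. of_bool (l \<in> G) * real W)"
    by (rule sum_mono)
  also have "\<dots> = real (card ({1..<Q} \<inter> {l. l \<in> G})) * real W"
    by (simp flip: sum_distrib_right)
  also have "{1..<Q} \<inter> {l. l \<in> G} = G" unfolding G_def by auto
  also have "card G \<le> card ({0..<int W} \<union> {int Q - int W..<int Q})"
  proof (unfold G_def, intro card_mult_mod_in_le prime_Q)
    have "a < Q" "b < Q" using assms(1,2) A_less by auto
    then show "\<bar>int b - int a\<bar> < int Q" by linarith
  qed (use assms(3) in auto)
  also have "\<dots> \<le> 2 * W"
    using card_Un_le[of "{0..<int W}" "{int Q - int W..<int Q}"] by simp
  finally show ?thesis by (simp add: mult_right_mono)
qed

lemma sum_bin_hit_ge:
  assumes t: "t \<in> T"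
  shows "2 * (\<Sum>l\<in>{1..<Q}. \<Sum>u\<in>{..<Q}. of_bool (\<exists>a\<in>A. residue l u a \<in> bin t))
    \<ge> 2 * real (card A) * real (Q - 1) * real W - real (card A) * real (card A - 1) * (2 * real W * real W)"
proof -
  define hit where "hit l u a = (of_bool (residue l u a \<in> bin t) :: real)" for l u a
  have "(\<Sum>l\<in>{1..<Q}. \<Sum>u\<in>{..<Q}. \<Sum>a\<in>A. hit l u a) = (\<Sum>a\<in>A. \<Sum>l\<in>{1..<Q}. \<Sum>u\<in>{..<Q}. hit l u a)"
    by (rule sum_rotate3)
  also have "\<dots> = real (card A) * real (Q - 1) * real W"
    using sum_residue_in_bin[OF t] by (simp add: hit_def)
  finally have singles: "(\<Sum>l\<in>{1..<Q}. \<Sum>u\<in>{..<Q}. \<Sum>a\<in>A. hit l u a)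
      = real (card A) * real (Q - 1) * real W" .
  have "(\<Sum>l\<in>{1..<Q}. \<Sum>u\<in>{..<Q}. \<Sum>a\<in>A. \<Sum>b\<in>A-{a}. hit l u a * hit l u b)
      = (\<Sum>a\<in>A. \<Sum>l\<in>{1..<Q}. \<Sum>u\<in>{..<Q}. \<Sum>b\<in>A-{a}. hit l u a * hit l u b)"
    by (rule sum_rotate3)
  also have "\<dots> = (\<Sum>a\<in>A. \<Sum>b\<in>A-{a}. \<Sum>l\<in>{1..<Q}. \<Sum>u\<in>{..<Q}. hit l u a * hit l u b)"
    by (rule sum.cong[OF refl]) (rule sum_rotate3)
  also have "\<dots> \<le> (\<Sum>a\<in>A. \<Sum>b\<in>A-{a}. 2 * real W * real W)"
    using sum_pair_in_bin_le[OF _ _ _ t] unfolding hit_def by (intro sum_mono) auto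
  also have "\<dots> = real (card A) * real (card A - 1) * (2 * real W * real W)"
    using finite_A by (simp add: card_Diff_singleton mult_ac)
  finally have pairs: "(\<Sum>l\<in>{1..<Q}. \<Sum>u\<in>{..<Q}. \<Sum>a\<in>A. \<Sum>b\<in>A-{a}. hit l u a * hit l u b)
      \<le> real (card A) * real (card A - 1) * (2 * real W * real W)" .
  have "2 * (\<Sum>l\<in>{1..<Q}. \<Sum>u\<in>{..<Q}. of_bool (\<exists>a\<in>A. residue l u a \<in> bin t) :: real)
      = (\<Sum>l\<in>{1..<Q}. \<Sum>u\<in>{..<Q}. 2 * of_bool (\<exists>a\<in>A. residue l u a \<in> bin t))"
    by (simp only: sum_distrib_left)
  also have "\<dots> \<ge> (\<Sum>l\<in>{1..<Q}. \<Sum>u\<in>{..<Q}.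
      2 * (\<Sum>a\<in>A. hit l u a) - (\<Sum>a\<in>A. \<Sum>b\<in>A-{a}. hit l u a * hit l u b))"
    unfolding hit_def by (intro sum_mono bonferroni_of_bool finite_A)
  also have "(\<Sum>l\<in>{1..<Q}. \<Sum>u\<in>{..<Q}.
      2 * (\<Sum>a\<in>A. hit l u a) - (\<Sum>a\<in>A. \<Sum>b\<in>A-{a}. hit l u a * hit l u b))
      = 2 * (\<Sum>l\<in>{1..<Q}. \<Sum>u\<in>{..<Q}. \<Sum>a\<in>A. hit l u a)
        - (\<Sum>l\<in>{1..<Q}. \<Sum>u\<in>{..<Q}. \<Sum>a\<in>A. \<Sum>b\<in>A-{a}. hit l u a * hit l u b)"
    by (simp add: sum_subtractf sum_distrib_left)
  finally show ?thesis
    using singles pairs by linarith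
qed

lemma sum_card_occupied_ge:
  "2 * (\<Sum>l\<in>{1..<Q}. \<Sum>u\<in>{..<Q}. real (card (occupied l u)))
    \<ge> real (card T) * (2 * real (card A) * real (Q - 1) * real W
        - real (card A) * real (card A - 1) * (2 * real W * real W))"
proof -
  have "real (card (occupied l u)) = (\<Sum>t\<in>T. of_bool (\<exists>a\<in>A. residue l u a \<in> bin t))" for l u
    using finite_T by (simp add: occupied_def Int_def)
  then have "(\<Sum>l\<in>{1..<Q}. \<Sum>u\<in>{..<Q}. real (card (occupied l u)))
      = (\<Sum>t\<in>T. \<Sum>l\<in>{1..<Q}. \<Sum>u\<in>{..<Q}. of_bool (\<exists>a\<in>A. residue l u a \<in> bin t))"
    by (simp add: sum_rotate3)
  moreover have "(\<Sum>t\<in>T. 2 * (\<Sum>l\<in>{1..<Q}. \<Sum>u\<in>{..<Q}. of_bool (\<exists>a\<in>A. residue l u a \<in> bin t)))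
      \<ge> (\<Sum>t\<in>T. 2 * real (card A) * real (Q - 1) * real W
          - real (card A) * real (card A - 1) * (2 * real W * real W))"
    by (intro sum_mono sum_bin_hit_ge)
  ultimately show ?thesis by (simp add: sum_distrib_left)
qed

text \<open>By Bonferroni, a random affine map hits a given bin with probability at least about
  \<open>x - x\<^sup>2\<close> for \<open>x = |A| W / Q \<in> [1/4, 1/2]\<close>, so some map occupies an eighth of the bins.\<close>
lemma ex_sidon_subset_card_ge:
  assumes A: "card A \<ge> 1" and W: "2 * card A * W \<le> Q - 1" "Q \<le> 4 * card A * W"
  shows "\<exists>B\<subseteq>A. sidon B \<and> card T \<le> 8 * card B"
proof -
  define m where "m = real (card A)"
  define x where "x = m * real W"
  define q where "q = real Q"
  define K where "K = real (card T)"
  have q: "q \<ge> 2" "real (Q - 1) = q - 1"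
    using prime_ge_2_nat[OF prime_Q] by (simp_all add: q_def of_nat_diff)
  have x: "2 * x \<le> q - 1" "q \<le> 4 * x"
    using W q(2) unfolding x_def m_def q_def
    by (metis of_nat_le_iff of_nat_mult of_nat_numeral mult.assoc)+
  have "real (card A) * real (card A - 1) \<le> m * m" unfolding m_def using A by (simp add: of_nat_diff)
  then have "real (card A) * real (card A - 1) * (2 * real W * real W) \<le> m * m * (2 * real W * real W)"
    by (intro mult_right_mono) auto
  then have "2 * real (card A) * real (Q - 1) * real W
      - real (card A) * real (card A - 1) * (2 * real W * real W) \<ge> 2 * x * (q - 1 - x)"
    unfolding x_def q(2) by (simp add: m_def algebra_simps)
  moreover have "x * (q - 1 - x) \<ge> (q / 4) * ((q - 1) / 2)"
    using x q by (intro mult_mono) auto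
  ultimately have "K * (q * (q - 1) / 4) \<le> K * (2 * real (card A) * real (Q - 1) * real W
      - real (card A) * real (card A - 1) * (2 * real W * real W))"
    by (intro mult_left_mono) (auto simp: K_def)
  then have total: "2 * (\<Sum>l\<in>{1..<Q}. \<Sum>u\<in>{..<Q}. real (card (occupied l u))) \<ge> K * (q * (q - 1) / 4)"
    using sum_card_occupied_ge unfolding K_def by linarith
  have "\<exists>l\<in>{1..<Q}. \<exists>u\<in>{..<Q}. K \<le> 8 * real (card (occupied l u))"
  proof (rule ccontr)
    assume "\<not> ?thesis"
    then have "real (card (occupied l u)) < K / 8" if "l \<in> {1..<Q}" "u \<in> {..<Q}" for l u
      using that by force
    then have "(\<Sum>l\<in>{1..<Q}. \<Sum>u\<in>{..<Q}. real (card (occupied l u))) < (\<Sum>l\<in>{1..<Q}. \<Sum>u\<in>{..<Q}. K / 8)"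
      using q(1) unfolding q_def by (intro sum_strict_mono) auto
    also have "\<dots> = (q - 1) * q * K / 8" using q by (simp add: q_def)
    finally show False using total by (simp add: algebra_simps)
  qed
  then obtain l u where "K \<le> 8 * real (card (occupied l u))" by blast
  moreover obtain B where "B \<subseteq> A" "sidon B" "card B = card (occupied l u)"
    using ex_sidon_subset_occupied by blast
  ultimately show ?thesis unfolding K_def by auto
qed

end

lemma ex_sidon_subset_of_prime:
  assumes A: "finite A" and p: "prime p" "p > 2" and pA: "6 * p^2 \<le> card A"
  shows "\<exists>B\<subseteq>A. sidon B \<and> p \<le> 8 * card B"
proof -
  define m where "m = card A"
  have "1 \<le> 6 * p^2" using p(2) by simp
  then have m: "m \<ge> 1" using pA unfolding m_def by linarith
  obtain Q where Q: "prime Q" "Q > 4*m + Max A" using bigger_prime by blast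
  have A_less: "\<forall>a\<in>A. a < Q"
    using Max_ge[OF A] Q(2) by fastforce
  define W where "W = (Q - 1) div (2*m)"
  have Q_ge: "4*m \<le> Q - 1" using Q(2) by simp
  have W_le: "2*m*W \<le> Q - 1"
    using div_times_less_eq_dividend[of "Q - 1" "2*m"] unfolding W_def by (simp add: mult_ac)
  have "(2*m) div (2*m) \<le> (Q - 1) div (2*m)" using Q_ge by (intro div_le_mono) simp
  then have W_pos: "W \<ge> 1" unfolding W_def using m by simp
  have "Q - 1 < 2*m + (Q - 1) div (2*m) * (2*m)"
    by (rule dividend_less_div_times) (use m in simp)
  then have "Q \<le> 2*m*W + 2*m" unfolding W_def by (simp add: algebra_simps)
  also have "\<dots> \<le> 4*m*W" using W_pos by simp
  finally have W_ge: "Q \<le> 4*m*W" .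
  have "6 * (2*p*p) * W = 2 * (6 * p^2) * W" by (simp add: power2_eq_square)
  also have "\<dots> \<le> 2*m*W" using pA unfolding m_def by simp
  finally have LW: "6 * (2*p*p) * W \<le> Q" using W_le by linarith
  have "finite (erdos_turan_set p)" "\<forall>t\<in>erdos_turan_set p. t < 2*p*p"
    using erdos_turan_set_less unfolding erdos_turan_set_def by auto
  then have "\<exists>B\<subseteq>A. sidon B \<and> card (erdos_turan_set p) \<le> 8 * card B"
    using ex_sidon_subset_card_ge[OF A _ sidon_erdos_turan_set[OF p] _ Q(1) A_less W_pos LW]
      m W_le W_ge unfolding m_def by blast
  then show ?thesis using card_erdos_turan_set p by simp
qed

lemma komlos_sulyok_szemeredi:
  "\<exists>D::nat. D \<ge> 1 \<and> (\<forall>A::nat set. finite A \<longrightarrow> A \<noteq> {} \<longrightarrow>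
     (\<exists>B\<subseteq>A. sidon B \<and> card A \<le> D * (card B)^2))"
proof -
  obtain C :: nat where C: "C \<ge> 1" "\<And>x. x \<ge> 1 \<Longrightarrow> \<exists>p. prime p \<and> x \<le> p \<and> p \<le> C*x"
    using weak_bertrand by blast
  define D where "D = 1632 * C^2"
  have "\<exists>B\<subseteq>A. sidon B \<and> card A \<le> D * (card B)^2" if A: "finite A" "A \<noteq> {}" for A
  proof (cases "card A < 96 * C^2")
    case True
    obtain a where "a \<in> A" using A(2) by blast
    then show ?thesis
      using True sidon_singleton[of a] by (intro exI[of _ "{a}"]) (auto simp: D_def)
  next
    case False
    have C2: "6 * C^2 > 0" using C(1) by simp
    define x where "x = floor_sqrt (card A div (6 * C^2))"
    have "\<not> card A div (6 * C^2) < 16" using False C2 by (simp add: div_less_iff_less_mult)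
    then have x: "4 \<le> x" unfolding x_def by (intro le_floor_sqrtI) simp
    then obtain p where p: "prime p" "x \<le> p" "p \<le> C*x" using C(2)[of x] by auto
    have "6 * p^2 \<le> 6 * C^2 * x^2"
      using p(3) by (simp add: power_mult_distrib[symmetric] power_mono)
    also have "\<dots> \<le> 6 * C^2 * (card A div (6 * C^2))"
      unfolding x_def by simp
    also have "\<dots> \<le> card A" by simp
    finally obtain B where B: "B \<subseteq> A" "sidon B" "p \<le> 8 * card B"
      using ex_sidon_subset_of_prime[OF A(1) p(1)] p(2) x by auto
    have "card A div (6 * C^2) < (x + 1)^2"
      using Suc_floor_sqrt_power2_gt unfolding x_def by simp
    then have "card A < 6 * C^2 * (x + 1)^2"
      using C2 by (simp add: div_less_iff_less_mult mult.commute)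
    also have "\<dots> \<le> 6 * C^2 * (16 * card B)^2"
      using x p(2) B(3) by (intro mult_le_mono2 power_mono) auto
    also have "\<dots> \<le> D * (card B)^2"
      by (simp add: D_def power_mult_distrib)
    finally show ?thesis using B by auto
  qed
  then show ?thesis using C(1) by (intro exI[of _ D]) (simp add: D_def)
qed

section \<open>Geodesics in the cube\<close>

definition flip_prefix :: "nat set \<Rightarrow> nat \<Rightarrow> nat set" where
  "flip_prefix x t = (x - {..<t}) \<union> ({..<t} - x)"

lemma hamming_flip_prefix:
  "hamming (flip_prefix x s) (flip_prefix x t) = (if s \<le> t then t - s else s - t)"
proof -
  have "(flip_prefix x s - flip_prefix x t) \<union> (flip_prefix x t - flip_prefix x s)
      = (if s \<le> t then {s..<t} else {t..<s})"
    unfolding flip_prefix_def by auto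
  then show ?thesis unfolding hamming_def by simp
qed

lemma flip_prefix_in_cube: "x \<in> cube n \<Longrightarrow> t \<le> n \<Longrightarrow> flip_prefix x t \<in> cube n"
  unfolding cube_def flip_prefix_def by auto

lemma flip_prefix_flip_prefix [simp]: "flip_prefix (flip_prefix x t) t = x"
  unfolding flip_prefix_def by blast

lemma inj_flip_prefix: "inj (flip_prefix x)"
proof (rule injI)
  fix s t assume "flip_prefix x s = flip_prefix x t"
  then have "hamming (flip_prefix x s) (flip_prefix x t) = 0" unfolding hamming_def by simp
  then show "s = t" by (simp add: hamming_flip_prefix split: if_splits)
qed

lemma card_flip_prefix_preimage:
  assumes "S \<subseteq> cube n" "t \<le> n"
  shows "card {x\<in>cube n. flip_prefix x t \<in> S} = card S"
proof -
  have "(\<lambda>x. flip_prefix x t) ` {x\<in>cube n. flip_prefix x t \<in> S} = S"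
    using assms by (force intro: image_eqI[of _ _ "flip_prefix _ t"] flip_prefix_in_cube)
  moreover have "inj_on (\<lambda>x. flip_prefix x t) {x\<in>cube n. flip_prefix x t \<in> S}"
    by (rule inj_on_inverseI[of _ "\<lambda>x. flip_prefix x t"]) simp
  ultimately show ?thesis using card_image by fastforce
qed

lemma ex_dense_flip_path:
  assumes S: "S \<subseteq> cube n" and dense: "\<alpha> * 2 ^ n \<le> real (card S)"
  shows "\<exists>x\<in>cube n. \<alpha> * real (n + 1) \<le> real (card {t\<in>{..n}. flip_prefix x t \<in> S})"
proof (rule ccontr)
  assume "\<not> ?thesis"
  then have less: "real (card {t\<in>{..n}. flip_prefix x t \<in> S}) < \<alpha> * real (n + 1)"
    if "x \<in> cube n" for x
    using that by (simp add: not_le)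
  have "(\<Sum>x\<in>cube n. real (card {t\<in>{..n}. flip_prefix x t \<in> S}))
      = (\<Sum>x\<in>cube n. \<Sum>t\<in>{..n}. of_bool (flip_prefix x t \<in> S))"
    by (simp add: Int_def)
  also have "\<dots> = (\<Sum>t\<in>{..n}. real (card {x\<in>cube n. flip_prefix x t \<in> S}))"
    by (subst sum.swap) (simp add: Int_def cube_def)
  also have "\<dots> = real (n + 1) * real (card S)"
    using card_flip_prefix_preimage[OF S] by simp
  also have "\<dots> \<ge> real (n + 1) * (\<alpha> * 2 ^ n)"
    using dense by (intro mult_left_mono) auto
  finally have "real (n + 1) * (\<alpha> * 2 ^ n)
      \<le> (\<Sum>x\<in>cube n. real (card {t\<in>{..n}. flip_prefix x t \<in> S}))" .
  also have "\<dots> < (\<Sum>x\<in>cube n. \<alpha> * real (n + 1))"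
    using less by (intro sum_strict_mono) (auto simp: cube_def)
  also have "\<dots> = real (n + 1) * (\<alpha> * 2 ^ n)"
    by (simp add: cube_def card_Pow)
  finally show False by simp
qed

lemma sidon_diff_inject:
  assumes B: "sidon B" "s \<in> B" "t \<in> B" "s' \<in> B" "t' \<in> B" and "s \<noteq> t" "s' \<noteq> t'"
    and diff: "(if s \<le> t then t - s else s - t) = (if s' \<le> t' then t' - s' else s' - t')"
  shows "{s, t} = {s', t'}"
proof -
  have sidon: "{a, b} = {c, d}" if "a \<in> B" "b \<in> B" "c \<in> B" "d \<in> B" "a + b = c + d" for a b c d
    using B(1) that unfolding sidon_def by blast
  consider "s < t" "s' < t'" | "s < t" "t' < s'" | "t < s" "s' < t'" | "t < s" "t' < s'"
    using \<open>s \<noteq> t\<close> \<open>s' \<noteq> t'\<close> by linarith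
  then show ?thesis
  proof cases
    case 1
    then have "{t, s'} = {t', s}" using diff B by (intro sidon) auto
    then show ?thesis using 1 by (auto simp: doubleton_eq_iff)
  next
    case 2
    then have "{t, t'} = {s', s}" using diff B by (intro sidon) auto
    then show ?thesis using 2 by (auto simp: doubleton_eq_iff)
  next
    case 3
    then have "{s, s'} = {t', t}" using diff B by (intro sidon) auto
    then show ?thesis using 3 by (auto simp: doubleton_eq_iff)
  next
    case 4
    then have "{s, t'} = {s', t}" using diff B by (intro sidon) auto
    then show ?thesis using 4 by (auto simp: doubleton_eq_iff)
  qed
qed

lemma rainbow_flip_prefix_image:
  assumes "sidon B"
  shows "rainbow (flip_prefix x ` B)"
  unfolding rainbow_def
proof (intro ballI impI)
  fix u v u' v' assume "u \<in> flip_prefix x ` B" "v \<in> flip_prefix x ` B"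
    "u' \<in> flip_prefix x ` B" "v' \<in> flip_prefix x ` B"
    and ne: "u \<noteq> v" "u' \<noteq> v'" and eq: "hamming u v = hamming u' v'"
  then obtain s t s' t' where st: "s \<in> B" "t \<in> B" "s' \<in> B" "t' \<in> B"
    and "u = flip_prefix x s" "v = flip_prefix x t" "u' = flip_prefix x s'" "v' = flip_prefix x t'"
    by blast
  moreover from this have "{s, t} = {s', t'}"
    using ne eq by (intro sidon_diff_inject[OF assms st]) (auto simp: hamming_flip_prefix)
  ultimately show "{u, v} = {u', v'}" by auto
qed

lemma card_le_rho:
  assumes "S \<subseteq> cube n" "R \<subseteq> S" "rainbow R"
  shows "card R \<le> rho S"
proof -
  have "finite S" using assms(1) finite_subset unfolding cube_def by blast
  then have "{card R | R. R \<subseteq> S \<and> rainbow R} \<subseteq> {..card S}"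
    using card_mono by auto
  then have "finite {card R | R. R \<subseteq> S \<and> rainbow R}"
    using finite_subset by blast
  then show ?thesis unfolding rho_def using assms(2,3) by (intro Max_ge) auto
qed

lemma rho_ge_sqrt_density:
  fixes D :: nat
  assumes sidon_bound: "\<And>A. finite A \<Longrightarrow> A \<noteq> {} \<Longrightarrow> \<exists>B\<subseteq>A. sidon B \<and> card A \<le> D * (card B)^2"
    and D: "D \<ge> 1" and \<alpha>: "\<alpha> > 0" and S: "S \<subseteq> cube n" "\<alpha> * 2 ^ n \<le> real (card S)"
  shows "1 / sqrt D * sqrt \<alpha> * sqrt (real n) \<le> real (rho S)"
proof -
  obtain x where x: "x \<in> cube n" "\<alpha> * real (n + 1) \<le> real (card {t\<in>{..n}. flip_prefix x t \<in> S})"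
    using ex_dense_flip_path[OF S] by blast
  have "{t\<in>{..n}. flip_prefix x t \<in> S} \<noteq> {}"
  proof
    assume empty: "{t\<in>{..n}. flip_prefix x t \<in> S} = {}"
    have "\<alpha> * real (n + 1) \<le> 0" using x(2) unfolding empty by simp
    moreover have "0 < \<alpha> * real (n + 1)" using \<alpha> by simp
    ultimately show False by linarith
  qed
  then obtain B where B: "B \<subseteq> {t\<in>{..n}. flip_prefix x t \<in> S}" "sidon B"
    "card {t\<in>{..n}. flip_prefix x t \<in> S} \<le> D * (card B)^2"
    using sidon_bound[of "{t\<in>{..n}. flip_prefix x t \<in> S}"] by auto
  have "\<alpha> * real n \<le> \<alpha> * real (n + 1)" using \<alpha> by simp
  also have "\<dots> \<le> real (card {t\<in>{..n}. flip_prefix x t \<in> S})"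
    using x(2) .
  also have "\<dots> \<le> real (D * (card B)^2)"
    using B(3) by (simp only: of_nat_le_iff)
  finally have "\<alpha> * real n / real D \<le> (real (card B))^2"
    using D by (simp add: divide_le_eq mult.commute)
  then have "sqrt (\<alpha> * real n / real D) \<le> sqrt ((real (card B))^2)"
    by (rule real_sqrt_le_mono)
  then have "1 / sqrt D * sqrt \<alpha> * sqrt (real n) \<le> sqrt ((real (card B))^2)"
    by (simp add: real_sqrt_mult real_sqrt_divide)
  also have "\<dots> = real (card (flip_prefix x ` B))"
    using card_image[OF inj_on_subset[OF inj_flip_prefix subset_UNIV]] by simp
  also have "card (flip_prefix x ` B) \<le> rho S"
    using B by (intro card_le_rho[OF S(1)] rainbow_flip_prefix_image) auto
  finally show ?thesis by simp
qed

theorem theorem1p6: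
  shows "\<exists>c::real. c > 0 \<and>
    (\<forall>(n::nat) (\<alpha>::real) S. 0 \<le> \<alpha> \<longrightarrow> \<alpha> \<le> 1 \<longrightarrow> S \<subseteq> cube n \<longrightarrow>
       real (card S) \<ge> \<alpha> * 2 ^ n \<longrightarrow>
       real (rho S) \<ge> c * sqrt \<alpha> * sqrt (real n))"
proof -
  obtain D :: nat where D: "D \<ge> 1"
    and sidon_bound: "\<And>A. finite A \<Longrightarrow> A \<noteq> {} \<Longrightarrow> \<exists>B\<subseteq>A. sidon B \<and> card A \<le> D * (card B)^2"
    using komlos_sulyok_szemeredi by blast
  show ?thesis
  proof (intro exI[of _ "1 / sqrt D"] conjI allI impI)
    show "0 < 1 / sqrt (real D)" using D by simp
    fix n \<alpha> S assume "0 \<le> \<alpha>" "\<alpha> \<le> 1" "S \<subseteq> cube n" "\<alpha> * 2 ^ n \<le> real (card S)"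
    then show "1 / sqrt D * sqrt \<alpha> * sqrt (real n) \<le> real (rho S)"
      using rho_ge_sqrt_density[OF sidon_bound D] by (cases "\<alpha> = 0") simp_all
  qed
qed

end
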